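(* Let $\mathcal{I}$ be an ideal of the multiloop algebra $\mathcal{L}$, and let $Y=\sum_{\bar r\in G}\sum_{n=1}^{\dim\mathfrak{g}_{\bar r}} x_{\bar r n}\otimes \pi_{\bar r n}(Y)\in\mathcal{I}$. Then $$x_{\bar k i}\otimes t^{k-\ell}\pi_{\bar\ell j}(Y)\in\mathcal{I}$$ for all $k,\ell\in\mathbb{Z}^N$, $1\le i\le \dim\mathfrak{g}_{\bar k}$ and $1\le j\le\dim\mathfrak{g}_{\bar\ell}$.
   Context: $F$ is an algebraically closed field of characteristic zero; $\mathfrak{g}$ is a finite-dimensional simple Lie algebra over $F$; $\sigma_1,\dots,\sigma_N$ are pairwise commuting automorphisms of $\mathfrak{g}$ of finite orders $m_1,\dots,m_N$; for each $i$, $\xi_i\in F$ is a fixed primitive $m_i$-th root of unity. Let $G=\mathbb{Z}/m_1\mathbb{Z}\times\cdots\times\mathbb{Z}/m_N\mathbb{Z}$ and write $\bar k$ for the image of $k\in\mathbb{Z}^N$ in $G$. Set $\mathfrak{g}_{\bar k}=\{x\in\mathfrak{g}: \sigma_i x=\xi_i^{k_i}x \text{ for } i=1,\dots,N\}$, so $\mathfrak{g}=\bigoplus_{\bar k\in G}\mathfrak{g}_{\bar k}$. Let $R=F[t_1^{\pm1},\dots,t_N^{\pm1}]$, $t^k=t_1^{k_1}\cdots t_N^{k_N}$, $R_{\bar 0}=F[t_1^{\pm m_1},\dots,t_N^{\pm m_N}]$ and $R_{\bar k}=t^kR_{\bar 0}$ (so $R=\bigoplus_{\bar k\in G}R_{\bar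 k}$). The multiloop algebra is $\mathcal{L}=\mathcal{L}(\mathfrak{g};\sigma_1,\dots,\sigma_N)=\bigoplus_{k\in\mathbb{Z}^N}\mathfrak{g}_{\bar k}\otimes Ft^k=\bigoplus_{\bar k\in G}\mathfrak{g}_{\bar k}\otimes R_{\bar k}\subseteq \mathfrak{g}\otimes R$, with bracket $[x\otimes f,y\otimes g]=[x,y]\otimes fg$. For each $\bar k\in G$ fix a basis $\{x_{\bar k j}: j=1,\dots,\dim\mathfrak{g}_{\bar k}\}$ of $\mathfrak{g}_{\bar k}$, so $\mathcal{L}=\bigoplus_{\bar k}\bigoplus_j Fx_{\bar kj}\otimes R_{\bar k}$; let $\pi_{\bar kj}:\mathcal{L}\to R_{\bar k}$ be the projection onto the summand $Fx_{\bar kj}\otimes R_{\bar k}$ followed by the identification $x_{\bar kj}\otimes f\mapsto f$. *)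

theory Defs
  imports Main "HOL-Library.Poly_Mapping" "HOL-Library.Function_Algebras"
    "HOL-Computational_Algebra.Polynomial"
begin

definition alg_closed :: "'f::field itself \<Rightarrow> bool" where
  "alg_closed _ \<longleftrightarrow> (\<forall>p::'f poly. degree p > 0 \<longrightarrow> (\<exists>x. poly p x = 0))"

definition lie_algebra :: "('f::field \<Rightarrow> 'g::ab_group_add \<Rightarrow> 'g) \<Rightarrow> ('g \<Rightarrow> 'g \<Rightarrow> 'g) \<Rightarrow> bool" where
  "lie_algebra scale br \<longleftrightarrow> vector_space scale
     \<and> (\<forall>x y z. br (x + y) z = br x z + br y z)
     \<and> (\<forall>x y z. br x (y + z) = br x y + br x z)
     \<and> (\<forall>c x y. br (scale c x) y = scale c (br x y))
     \<and> (\<forall>c x y. br x (scale c y) = scale c (br x y))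
     \<and> (\<forall>x. br x x = 0)
     \<and> (\<forall>x y z. br x (br y z) + br y (br z x) + br z (br x y) = 0)"

definition lie_ideal :: "('f::field \<Rightarrow> 'g::ab_group_add \<Rightarrow> 'g) \<Rightarrow> ('g \<Rightarrow> 'g \<Rightarrow> 'g) \<Rightarrow> 'g set \<Rightarrow> bool" where
  "lie_ideal scale br I \<longleftrightarrow> module.subspace scale I \<and> (\<forall>x y. y \<in> I \<longrightarrow> br x y \<in> I)"

definition simple_lie_algebra :: "('f::field \<Rightarrow> 'g::ab_group_add \<Rightarrow> 'g) \<Rightarrow> ('g \<Rightarrow> 'g \<Rightarrow> 'g) \<Rightarrow> bool" where
  "simple_lie_algebra scale br \<longleftrightarrow> lie_algebra scale br
     \<and> (\<exists>B. finite B \<and> module.span scale B = UNIV)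
     \<and> (\<exists>x y. br x y \<noteq> 0)
     \<and> (\<forall>I. lie_ideal scale br I \<longrightarrow> I = {0} \<or> I = UNIV)"

definition lie_aut :: "('f::field \<Rightarrow> 'g::ab_group_add \<Rightarrow> 'g) \<Rightarrow> ('g \<Rightarrow> 'g \<Rightarrow> 'g) \<Rightarrow> ('g \<Rightarrow> 'g) \<Rightarrow> bool" where
  "lie_aut scale br s \<longleftrightarrow> bij s \<and> module_hom scale scale s \<and> (\<forall>x y. s (br x y) = br (s x) (s y))"

definition has_order :: "('g \<Rightarrow> 'g) \<Rightarrow> nat \<Rightarrow> bool" where
  "has_order s m \<longleftrightarrow> m > 0 \<and> (s ^^ m) = id \<and> (\<forall>d. 0 < d \<and> d < m \<longrightarrow> (s ^^ d) \<noteq> id)"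

definition primitive_root :: "'f::field \<Rightarrow> nat \<Rightarrow> bool" where
  "primitive_root z m \<longleftrightarrow> m > 0 \<and> z ^ m = 1 \<and> (\<forall>d. 0 < d \<and> d < m \<longrightarrow> z ^ d \<noteq> 1)"

text \<open>The image \<open>k bar\<close> of k in G, represented by its normalized representative.\<close>
definition gbar :: "('n \<Rightarrow> nat) \<Rightarrow> ('n \<Rightarrow> int) \<Rightarrow> ('n \<Rightarrow> int)" where
  "gbar m k = (\<lambda>i. k i mod int (m i))"

definition Gset :: "('n \<Rightarrow> nat) \<Rightarrow> ('n \<Rightarrow> int) set" where
  "Gset m = {r. \<forall>i. 0 \<le> r i \<and> r i < int (m i)}"

definition gcomp :: "('f::field \<Rightarrow> 'g::ab_group_add \<Rightarrow> 'g) \<Rightarrow> ('n \<Rightarrow> 'g \<Rightarrow> 'g) \<Rightarrow> ('n \<Rightarrow> 'f)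
    \<Rightarrow> ('n \<Rightarrow> nat) \<Rightarrow> ('n \<Rightarrow> int) \<Rightarrow> 'g set" where
  "gcomp scale sigma xi m k = {x. \<forall>i. sigma i x = scale (xi i ^ nat (k i mod int (m i))) x}"

text \<open>g \<otimes> R with R = F[t_i^{\<pm>1}] is modelled as finitely supported maps Z^N \<rightarrow> g,
  X = \<Sum>_k X(k) \<otimes> t^k.  Laurent polynomials R are finitely supported maps Z^N \<rightarrow> F.\<close>
definition tens :: "('f::field \<Rightarrow> 'g::ab_group_add \<Rightarrow> 'g) \<Rightarrow> 'g \<Rightarrow> (('n \<Rightarrow> int) \<Rightarrow>\<^sub>0 'f) \<Rightarrow> ('n \<Rightarrow> int) \<Rightarrow>\<^sub>0 'g" where
  "tens scale x f = Poly_Mapping.map (\<lambda>c. scale c x) f"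

definition tpow :: "('n \<Rightarrow> int) \<Rightarrow> ('n \<Rightarrow> int) \<Rightarrow>\<^sub>0 'f::field" where
  "tpow k = Poly_Mapping.single k 1"

definition lbr :: "('g::ab_group_add \<Rightarrow> 'g \<Rightarrow> 'g) \<Rightarrow> (('n \<Rightarrow> int) \<Rightarrow>\<^sub>0 'g) \<Rightarrow> (('n \<Rightarrow> int) \<Rightarrow>\<^sub>0 'g) \<Rightarrow> ('n \<Rightarrow> int) \<Rightarrow>\<^sub>0 'g" where
  "lbr br X Y = (\<Sum>a\<in>Poly_Mapping.keys X. \<Sum>b\<in>Poly_Mapping.keys Y. Poly_Mapping.single (a + b) (br (Poly_Mapping.lookup X a) (Poly_Mapping.lookup Y b)))"

definition lsmul :: "('f::field \<Rightarrow> 'g::ab_group_add \<Rightarrow> 'g) \<Rightarrow> 'f \<Rightarrow> (('n \<Rightarrow> int) \<Rightarrow>\<^sub>0 'g) \<Rightarrow> ('n \<Rightarrow> int) \<Rightarrow>\<^sub>0 'g" where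
  "lsmul scale c X = Poly_Mapping.map (scale c) X"

definition multiloop :: "('f::field \<Rightarrow> 'g::ab_group_add \<Rightarrow> 'g) \<Rightarrow> ('n \<Rightarrow> 'g \<Rightarrow> 'g) \<Rightarrow> ('n \<Rightarrow> 'f)
    \<Rightarrow> ('n \<Rightarrow> nat) \<Rightarrow> (('n \<Rightarrow> int) \<Rightarrow>\<^sub>0 'g) set" where
  "multiloop scale sigma xi m = {X. \<forall>k. Poly_Mapping.lookup X k \<in> gcomp scale sigma xi m k}"

definition loop_ideal :: "('f::field \<Rightarrow> 'g::ab_group_add \<Rightarrow> 'g) \<Rightarrow> ('g \<Rightarrow> 'g \<Rightarrow> 'g) \<Rightarrow> ('n \<Rightarrow> 'g \<Rightarrow> 'g)
    \<Rightarrow> ('n \<Rightarrow> 'f) \<Rightarrow> ('n \<Rightarrow> nat) \<Rightarrow> (('n \<Rightarrow> int) \<Rightarrow>\<^sub>0 'g) set \<Rightarrow> bool" where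
  "loop_ideal scale br sigma xi m I \<longleftrightarrow> I \<subseteq> multiloop scale sigma xi m \<and> 0 \<in> I
     \<and> (\<forall>X\<in>I. \<forall>Y\<in>I. X + Y \<in> I) \<and> (\<forall>c. \<forall>X\<in>I. lsmul scale c X \<in> I)
     \<and> (\<forall>X\<in>multiloop scale sigma xi m. \<forall>Y\<in>I. lbr br X Y \<in> I)"

text \<open>projection pi_{r j}: L \<rightarrow> R_r (r a normalized representative in G, j < dim g_r, 0-based)\<close>
definition proj :: "('f::field \<Rightarrow> 'g::ab_group_add \<Rightarrow> 'g) \<Rightarrow> ('n \<Rightarrow> nat) \<Rightarrow> (('n \<Rightarrow> int) \<Rightarrow> nat \<Rightarrow> 'g)
    \<Rightarrow> (('n \<Rightarrow> int) \<Rightarrow> nat) \<Rightarrow> ('n \<Rightarrow> int) \<Rightarrow> nat \<Rightarrow> (('n \<Rightarrow> int) \<Rightarrow>\<^sub>0 'g) \<Rightarrow> ('n \<Rightarrow> int) \<Rightarrow>\<^sub>0 'f" where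
  "proj scale m xb d r j X = Poly_Mapping.mapp
     (\<lambda>k v. if gbar m k = r then module.representation scale (xb r ` {..<d r}) v (xb r j) else 0) X"

end

theory Submission
  imports Defs "HOL-Library.FuncSet"
begin

(*
  The element  x_{k i} (x) t^(k-l) pi_{l j}(Y)  is obtained from Y by applying to every
  coefficient the linear map  T v = (j-th coordinate of the g_l-component of v) * x_{k i}  and
  shifting all exponents by k - l; T is homogeneous of degree k - l for the G-grading of g.
  So the theorem follows once every homogeneous linear map of degree s is known to act on I in
  this way.  Every element of Alg splits into homogeneous pieces generated by ad of
     homogeneous elements (Galg s), so a homogeneous linear map of degree s lies in Galg s.
  3. Loop algebra: for x in g_s the bracket [x (x) t^s, Y] is the shift of Y by ad x, hence
     induction over Galg s shows that the shift of Y by any element of Galg s stays in I.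
*)

locale simple_lie = vector_space scale for scale :: "'f::field \<Rightarrow> 'g::ab_group_add \<Rightarrow> 'g" +
  fixes br :: "'g \<Rightarrow> 'g \<Rightarrow> 'g"
  assumes simple: "simple_lie_algebra scale br"
    and alg_closed: "alg_closed TYPE('f)"
begin

text \<open>Linear endomorphisms of \<open>\<gfrak>\<close>, stated elementwise so that the simplifier can use them.\<close>
definition lin :: "('g \<Rightarrow> 'g) \<Rightarrow> bool" where
  "lin a \<longleftrightarrow> (\<forall>x y. a (x + y) = a x + a y) \<and> (\<forall>c x. a (scale c x) = scale c (a x))"

lemma lin_hom: "lin a \<Longrightarrow> module_hom scale scale a"
  unfolding lin_def module_hom_iff using module_axioms by auto

lemma lin_0: "lin a \<Longrightarrow> a 0 = 0" using module_hom.zero[OF lin_hom] .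
lemma lin_add: "lin a \<Longrightarrow> a (x + y) = a x + a y" unfolding lin_def by auto
lemma lin_scale: "lin a \<Longrightarrow> a (scale c x) = scale c (a x)" unfolding lin_def by auto
lemma lin_diff: "lin a \<Longrightarrow> a (x - y) = a x - a y" using module_hom.diff[OF lin_hom] .
lemma lin_sum: "lin a \<Longrightarrow> a (sum g S) = (\<Sum>x\<in>S. a (g x))" using module_hom.sum[OF lin_hom] .

lemma lin_comp: "lin a \<Longrightarrow> lin b \<Longrightarrow> lin (\<lambda>v. a (b v))" unfolding lin_def by auto
lemma lin_plus: "lin a \<Longrightarrow> lin b \<Longrightarrow> lin (\<lambda>v. a v + b v)"
  unfolding lin_def by (auto simp: algebra_simps)
lemma lin_smul: "lin a \<Longrightarrow> lin (\<lambda>v. scale c (a v))"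
  unfolding lin_def by (auto simp: algebra_simps)
lemma lin_sumf: "(\<And>j. j \<in> S \<Longrightarrow> lin (F j)) \<Longrightarrow> lin (\<lambda>v. \<Sum>j\<in>S. F j v)"
  by (induction S rule: infinite_finite_induct) (auto simp: lin_plus, auto simp: lin_def)
lemma lin_funpow: "lin f \<Longrightarrow> lin (f ^^ j)"
  by (induction j) (auto simp: lin_comp[of f] lin_def)

lemma lin_eq_span:
  assumes "lin a" "lin b" "\<And>x. x \<in> B \<Longrightarrow> a x = b x" "u \<in> span B"
  shows "a u = b u"
  using assms(4)
proof (induction rule: span_induct)
  case base
  show ?case unfolding subspace_def
    by (auto simp: lin_0 lin_add lin_scale assms(1,2))
next
  case (step x) then show ?case using assms(3) by simp
qed

lemma lie: "lie_algebra scale br" using simple unfolding simple_lie_algebra_def by auto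
lemma br_add_l: "br (x + y) z = br x z + br y z" using lie unfolding lie_algebra_def by auto
lemma br_add_r: "br x (y + z) = br x y + br x z" using lie unfolding lie_algebra_def by auto
lemma br_scale_l: "br (scale c x) y = scale c (br x y)" using lie unfolding lie_algebra_def by auto
lemma br_scale_r: "br x (scale c y) = scale c (br x y)" using lie unfolding lie_algebra_def by auto
lemma br_0_l [simp]: "br 0 y = 0" using br_scale_l[of 0 0 y] by simp
lemma br_0_r [simp]: "br x 0 = 0" using br_scale_r[of x 0 0] by simp
lemma lin_br: "lin (br x)" unfolding lin_def by (simp add: br_add_r br_scale_r)
lemma findim: "\<exists>B. finite B \<and> span B = UNIV" using simple unfolding simple_lie_algebra_def by auto
lemma nonabelian: "\<exists>x y. br x y \<noteq> 0" using simple unfolding simple_lie_algebra_def by auto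
lemma ideals: "lie_ideal scale br J \<Longrightarrow> J = {0} \<or> J = UNIV"
  using simple unfolding simple_lie_algebra_def by auto

lemma lie_idealI:
  assumes "0 \<in> S" "\<And>x y. x \<in> S \<Longrightarrow> y \<in> S \<Longrightarrow> x + y \<in> S"
    "\<And>c x. x \<in> S \<Longrightarrow> scale c x \<in> S" "\<And>x y. y \<in> S \<Longrightarrow> br x y \<in> S"
  shows "lie_ideal scale br S"
  unfolding lie_ideal_def subspace_def using assms by auto

text \<open>Evaluation \<open>p(f) w\<close> of a polynomial at a linear endomorphism; its algebraic properties
  follow by comparing coefficients up to a common degree bound.\<close>
definition pe :: "('g \<Rightarrow> 'g) \<Rightarrow> 'f poly \<Rightarrow> 'g \<Rightarrow> 'g" where
  "pe f p w = (\<Sum>i\<le>degree p. scale (coeff p i) ((f ^^ i) w))"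

lemma pe_bound: "degree p \<le> n \<Longrightarrow> pe f p w = (\<Sum>i\<le>n. scale (coeff p i) ((f ^^ i) w))"
  unfolding pe_def by (rule sum.mono_neutral_left) (auto simp: coeff_eq_0)

lemma pe_add: "pe f (p + q) w = pe f p w + pe f q w"
proof -
  let ?n = "max (degree p) (degree q)"
  have "degree (p + q) \<le> ?n" by (rule degree_add_le) auto
  then show ?thesis
    by (simp add: pe_bound[of _ ?n] sum.distrib scale_left_distrib)
qed

lemma pe_diff: "pe f (p - q) w = pe f p w - pe f q w"
proof -
  let ?n = "max (degree p) (degree q)"
  have "degree (p - q) \<le> ?n" by (rule degree_diff_le) auto
  then show ?thesis
    by (simp add: pe_bound[of _ ?n] sum_subtractf scale_left_diff_distrib)
qed

lemma pe_smult: "pe f (smult c p) w = scale c (pe f p w)"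
  by (simp add: pe_bound[of _ "degree p"] degree_smult_le scale_sum_right)

lemma pe_zero [simp]: "pe f 0 w = 0" by (simp add: pe_def)

lemma pe_const: "pe f [:c:] w = scale c w" by (simp add: pe_def)

lemma pe_sum: "pe f (\<Sum>i\<in>S. p i) w = (\<Sum>i\<in>S. pe f (p i) w)"
  by (induction S rule: infinite_finite_induct) (auto simp: pe_add)

lemma pe_monom: "pe f (monom c k) w = scale c ((f ^^ k) w)"
proof -
  have "pe f (monom c k) w = (\<Sum>i\<le>k. scale (coeff (monom c k) i) ((f ^^ i) w))"
    by (rule pe_bound) (simp add: degree_monom_le)
  also have "\<dots> = (\<Sum>i\<le>k. if i = k then scale c ((f ^^ k) w) else 0)"
    by (rule sum.cong) auto
  finally show ?thesis by simp
qed

lemma pe_pCons: assumes "lin f" shows "pe f (pCons a p) w = scale a w + f (pe f p w)"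
proof -
  have "pe f (pCons a p) w = (\<Sum>i\<le>Suc (degree p). scale (coeff (pCons a p) i) ((f ^^ i) w))"
    by (rule pe_bound) (simp add: degree_pCons_le)
  also have "\<dots> = scale a w + (\<Sum>i\<le>degree p. scale (coeff p i) (f ((f ^^ i) w)))"
    by (subst sum.atMost_Suc_shift) simp
  also have "\<dots> = scale a w + f (pe f p w)"
    by (simp add: pe_def lin_sum[OF assms] lin_scale[OF assms])
  finally show ?thesis .
qed

lemma pe_mult: assumes "lin f" shows "pe f (p * q) w = pe f p (pe f q w)"
proof (induction p)
  case 0 then show ?case by simp
next
  case (pCons a p)
  have "pe f (pCons a p * q) w = scale a (pe f q w) + pe f (pCons 0 (p * q)) w"
    by (simp add: pe_add pe_smult)
  also have "\<dots> = scale a (pe f q w) + f (pe f p (pe f q w))"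
    by (simp add: pe_pCons[OF assms] pCons.IH)
  also have "\<dots> = pe f (pCons a p) (pe f q w)" by (simp add: pe_pCons[OF assms])
  finally show ?case .
qed

text \<open>In finite dimension every vector is killed by a nonzero polynomial in \<open>f\<close>: the vectors
  \<open>f\<^sup>i v\<close>, \<open>i \<le> dim\<close>, are either not distinct or linearly dependent.\<close>
lemma annihilating_poly:
  assumes "finite B" "span B = UNIV"
  shows "\<exists>p. p \<noteq> 0 \<and> pe f p v = 0"
proof -
  define n where "n = card B"
  define g where "g i = (f ^^ i) v" for i
  show ?thesis
  proof (cases "inj_on g {..n}")
    case False
    then obtain i j where ij: "i \<le> n" "j \<le> n" "i \<noteq> j" "g i = g j"
      unfolding inj_on_def by blast
    define p where "p = monom (1::'f) j - monom 1 i"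
    have "coeff p j \<noteq> 0" using ij by (simp add: p_def)
    then have "p \<noteq> 0" by auto
    moreover have "pe f p v = 0" using ij(4) by (simp add: p_def pe_diff pe_monom g_def)
    ultimately show ?thesis by blast
  next
    case True
    define S where "S = g ` {..n}"
    have card_S: "card S = Suc n" using True by (simp add: S_def card_image)
    have "dependent S"
    proof (rule ccontr)
      assume "independent S"
      then have "card S \<le> card B" using independent_span_bound[OF assms(1)] assms(2) by simp
      then show False using card_S n_def by simp
    qed
    then obtain u where u: "\<exists>x\<in>S. u x \<noteq> 0" "(\<Sum>x\<in>S. scale (u x) x) = 0"
      using dependent_finite[of S] unfolding S_def by auto
    define p where "p = (\<Sum>i\<le>n. monom (u (g i)) i)"
    obtain j where j: "j \<le> n" "u (g j) \<noteq> 0" using u(1) unfolding S_def by auto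
    have "coeff p j = u (g j)" using j(1) by (simp add: p_def coeff_sum)
    then have "p \<noteq> 0" using j(2) by auto
    have "pe f p v = (\<Sum>i\<le>n. scale (u (g i)) (g i))"
      by (simp add: p_def pe_sum pe_monom g_def)
    also have "\<dots> = (\<Sum>x\<in>S. scale (u x) x)" unfolding S_def
      by (subst sum.reindex[OF True]) simp
    finally show ?thesis using u(2) \<open>p \<noteq> 0\<close> by auto
  qed
qed

text \<open>Over an algebraically closed field, a nonzero vector annihilated by a nonzero polynomial
  in \<open>f\<close> yields an eigenvector: split off a linear factor \<open>X - x\<close> and recurse on the degree.\<close>
lemma eigenvector_from_poly:
  assumes "lin f"
  shows "degree p = n \<Longrightarrow> p \<noteq> 0 \<Longrightarrow> pe f p v = 0 \<Longrightarrow> v \<noteq> 0 \<Longrightarrow> \<exists>c w. w \<noteq> 0 \<and> f w = scale c w"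
proof (induction n arbitrary: p v rule: less_induct)
  case (less n)
  show ?case
  proof (cases "n = 0")
    case True
    then have p: "p = [:coeff p 0:]" using degree_0_id less.prems(1) by metis
    then have "scale (coeff p 0) v = 0" using less.prems(3) pe_const by metis
    moreover have "coeff p 0 \<noteq> 0" using p less.prems(2) by auto
    ultimately show ?thesis using less.prems(4) by simp
  next
    case False
    then obtain x where "poly p x = 0" using alg_closed less.prems(1) unfolding alg_closed_def by auto
    then obtain q where pq: "p = [:-x, 1:] * q" using poly_eq_0_iff_dvd by (metis dvdE)
    have "q \<noteq> 0" using pq less.prems(2) by auto
    have "degree p = degree [:-x, 1:] + degree q" unfolding pq
      by (rule degree_mult_eq) (auto simp: \<open>q \<noteq> 0\<close>)
    then have deg_q: "degree q < n" using less.prems(1) by simp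
    define u where "u = pe f q v"
    have "pe f p v = pe f [:-x, 1:] u" unfolding pq u_def by (rule pe_mult[OF assms])
    also have "\<dots> = scale (-x) u + f u"
      using pe_pCons[OF assms, of "-x" "[:1:]" u] pe_const[of f 1 u] by simp
    finally have "f u = scale x u" using less.prems(3) by (simp add: add_eq_0_iff)
    then show ?thesis
      using less.IH[OF deg_q refl \<open>q \<noteq> 0\<close> _ less.prems(4)] u_def by (cases "u = 0") auto
  qed
qed

lemma eigenvector:
  fixes f :: "'g \<Rightarrow> 'g" and v :: 'g
  assumes "lin f" "v \<noteq> 0"
  shows "\<exists>c w. w \<noteq> 0 \<and> f w = scale c w"
proof -
  obtain B where "finite B" "span B = UNIV" using findim by auto
  then obtain p where "p \<noteq> 0" "pe f p v = 0" using annihilating_poly by blast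
  then show ?thesis using eigenvector_from_poly[OF assms(1) refl] assms(2) by blast
qed

lemma center_trivial:
  assumes "\<And>x. br x y = 0" shows "y = 0"
proof (rule ccontr)
  assume "y \<noteq> 0"
  define Z where "Z = {z. \<forall>x. br x z = 0}"
  have "lie_ideal scale br Z" unfolding Z_def
    by (rule lie_idealI) (auto simp: br_add_r br_scale_r)
  moreover have "y \<in> Z" using assms unfolding Z_def by simp
  ultimately have "Z = UNIV" using ideals \<open>y \<noteq> 0\<close> by blast
  then show False using nonabelian unfolding Z_def by auto
qed

text \<open>Schur's lemma: a linear map commuting with every \<open>ad x\<close> is a scalar, because each of its
  eigenspaces is an ideal.\<close>
lemma schur:
  assumes f: "lin f" and comm: "\<And>x w. f (br x w) = br x (f w)"
  shows "\<exists>c. \<forall>w. f w = scale c w"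
proof -
  obtain x y where "br x y \<noteq> 0" using nonabelian by blast
  then obtain c w0 where w0: "w0 \<noteq> 0" "f w0 = scale c w0" using eigenvector[OF f] by blast
  define K where "K = {w. f w = scale c w}"
  have "lie_ideal scale br K" unfolding K_def
    by (rule lie_idealI)
       (auto simp: lin_0[OF f] lin_add[OF f] lin_scale[OF f] scale_right_distrib mult.commute
         comm br_scale_r)
  moreover have "w0 \<in> K" using w0 unfolding K_def by auto
  ultimately have "K = UNIV" using ideals w0(1) by blast
  then show ?thesis unfolding K_def by auto
qed

inductive_set Alg :: "('g \<Rightarrow> 'g) set" where
  Alg_br: "br x \<in> Alg"
| Alg_plus: "a \<in> Alg \<Longrightarrow> b \<in> Alg \<Longrightarrow> (\<lambda>v. a v + b v) \<in> Alg"
| Alg_smul: "a \<in> Alg \<Longrightarrow> (\<lambda>v. scale c (a v)) \<in> Alg"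
| Alg_comp: "a \<in> Alg \<Longrightarrow> b \<in> Alg \<Longrightarrow> (\<lambda>v. a (b v)) \<in> Alg"

lemma Alg_lin: "a \<in> Alg \<Longrightarrow> lin a"
proof (induction rule: Alg.induct)
  case (Alg_br x) show ?case by (rule lin_br)
next
  case (Alg_plus a b) then show ?case using lin_plus by blast
next
  case (Alg_smul a c) then show ?case using lin_smul by blast
next
  case (Alg_comp a b) then show ?case using lin_comp by blast
qed

lemma Alg_zero: "(\<lambda>v. 0) \<in> Alg"
proof -
  have "br 0 = (\<lambda>v. 0)" by auto
  then show ?thesis using Alg_br[of 0] by simp
qed

lemma Alg_sum: "finite S \<Longrightarrow> (\<And>s. s \<in> S \<Longrightarrow> A s \<in> Alg) \<Longrightarrow> (\<lambda>v. \<Sum>s\<in>S. A s v) \<in> Alg"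
  by (induction S rule: finite_induct) (auto intro: Alg_zero Alg_plus)

definition left_ideal :: "('g \<Rightarrow> 'g) set \<Rightarrow> bool" where
  "left_ideal J \<longleftrightarrow> (\<forall>a\<in>J. lin a) \<and> (\<lambda>v. 0) \<in> J
     \<and> (\<forall>a\<in>J. \<forall>b\<in>J. (\<lambda>v. a v + b v) \<in> J) \<and> (\<forall>a\<in>J. \<forall>c. (\<lambda>v. scale c (a v)) \<in> J)
     \<and> (\<forall>a\<in>J. \<forall>x. (\<lambda>v. br x (a v)) \<in> J)"

lemma left_ideal_annihilator: "left_ideal {a \<in> Alg. \<forall>x\<in>F. a x = 0}"
proof -
  have "(\<lambda>v. br x (a v)) \<in> Alg" if "a \<in> Alg" for a x using Alg_comp[OF Alg_br that] .
  then show ?thesis unfolding left_ideal_def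
    by (simp add: Alg_lin Alg_zero Alg_plus Alg_smul)
qed

text \<open>The orbit \<open>J u\<close> of a vector under a left ideal is an ideal of \<open>\<gfrak>\<close>, hence everything as
  soon as it is nonzero.\<close>
lemma left_ideal_orbit:
  assumes J: "left_ideal J" and a0: "a0 \<in> J" "a0 u \<noteq> 0"
  shows "\<exists>a\<in>J. a u = w"
proof -
  have J_zero: "(\<lambda>v. 0) \<in> J" and J_plus: "\<And>a b. a \<in> J \<Longrightarrow> b \<in> J \<Longrightarrow> (\<lambda>v. a v + b v) \<in> J"
    and J_smul: "\<And>a c. a \<in> J \<Longrightarrow> (\<lambda>v. scale c (a v)) \<in> J"
    and J_br: "\<And>a x. a \<in> J \<Longrightarrow> (\<lambda>v. br x (a v)) \<in> J"
    using J unfolding left_ideal_def by auto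
  define Ju where "Ju = (\<lambda>a. a u) ` J"
  have "lie_ideal scale br Ju" unfolding Ju_def
  proof (rule lie_idealI)
    show "0 \<in> (\<lambda>a. a u) ` J" by (rule image_eqI[where x="\<lambda>v. 0"]) (simp_all add: J_zero)
    show "x + z \<in> (\<lambda>a. a u) ` J" if "x \<in> (\<lambda>a. a u) ` J" "z \<in> (\<lambda>a. a u) ` J" for x z
      using that J_plus by fastforce
    show "scale c x \<in> (\<lambda>a. a u) ` J" if "x \<in> (\<lambda>a. a u) ` J" for c x
      using that J_smul by fastforce
    show "br x z \<in> (\<lambda>a. a u) ` J" if "z \<in> (\<lambda>a. a u) ` J" for x z
      using that J_br by fastforce
  qed
  moreover have "a0 u \<in> Ju" using a0 unfolding Ju_def by auto
  ultimately have "Ju = UNIV" using ideals a0(2) by blast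
  then have "w \<in> (\<lambda>a. a u) ` J" unfolding Ju_def by simp
  then show ?thesis by blast
qed

lemma Alg_transitive:
  assumes "u \<noteq> 0" shows "\<exists>a\<in>Alg. a u = w"
proof -
  obtain x where "br x u \<noteq> 0" using center_trivial assms by blast
  moreover have "left_ideal Alg" using left_ideal_annihilator[of "{}"] by simp
  ultimately show ?thesis using left_ideal_orbit Alg_br by blast
qed

text \<open>If \<open>u \<mapsto> v\<close> is compatible with a left ideal \<open>J\<close> acting nontrivially on \<open>u\<close>, then
  \<open>a u \<mapsto> a v\<close> is a well-defined map commuting with all \<open>ad x\<close>, so by Schur's lemma \<open>J\<close> acts
  on \<open>v\<close> as on a scalar multiple of \<open>u\<close>.\<close>
lemma left_ideal_intertwiner:
  assumes J: "left_ideal J" and a0: "a0 \<in> J" "a0 u \<noteq> 0"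
    and compat: "\<And>a. a \<in> J \<Longrightarrow> a u = 0 \<Longrightarrow> a v = 0"
  shows "\<exists>c. \<forall>a\<in>J. a v = scale c (a u)"
proof -
  have J_lin: "\<And>a. a \<in> J \<Longrightarrow> lin a" and J_plus: "\<And>a b. a \<in> J \<Longrightarrow> b \<in> J \<Longrightarrow> (\<lambda>v. a v + b v) \<in> J"
    and J_smul: "\<And>a c. a \<in> J \<Longrightarrow> (\<lambda>v. scale c (a v)) \<in> J"
    and J_br: "\<And>a x. a \<in> J \<Longrightarrow> (\<lambda>v. br x (a v)) \<in> J"
    using J unfolding left_ideal_def by auto
  have surj: "\<exists>a\<in>J. a u = w" for w by (rule left_ideal_orbit[OF J a0])
  define f where "f w = (SOME a. a \<in> J \<and> a u = w) v" for w
  have f: "f (a u) = a v" if "a \<in> J" for a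
  proof -
    define a' where "a' = (SOME a'. a' \<in> J \<and> a' u = a u)"
    have "\<exists>a'. a' \<in> J \<and> a' u = a u" using that by blast
    then have "a' \<in> J \<and> a' u = a u" unfolding a'_def by (rule someI_ex)
    moreover from this have "(\<lambda>x. a' x + scale (-1) (a x)) \<in> J" using J_plus J_smul that by blast
    ultimately have "a' v = a v"
      using compat[of "\<lambda>x. a' x + scale (-1) (a x)"] by (simp add: add_eq_0_iff)
    then show ?thesis unfolding f_def a'_def .
  qed
  have "lin f" unfolding lin_def
  proof safe
    fix x y
    obtain a b where "a \<in> J" "a u = x" "b \<in> J" "b u = y" using surj by metis
    then show "f (x + y) = f x + f y" using f[OF J_plus[of a b]] f by auto
  next
    fix c x
    obtain a where "a \<in> J" "a u = x" using surj by metis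
    then show "f (scale c x) = scale c (f x)" using f[OF J_smul[of a c]] f by auto
  qed
  moreover have "f (br x w) = br x (f w)" for x w
  proof -
    obtain a where "a \<in> J" "a u = w" using surj by metis
    then show ?thesis using f[OF J_br[of a x]] f by auto
  qed
  ultimately obtain c where "\<forall>w. f w = scale c w" using schur by blast
  then have "\<forall>a\<in>J. a v = scale c (a u)" using f by simp
  then show ?thesis by blast
qed

text \<open>Induction on \<open>F\<close>; the step applies the intertwiner lemma to the annihilator of \<open>F\<close>.\<close>
lemma separation:
  assumes "finite F"
  shows "v \<notin> span F \<Longrightarrow> \<exists>a\<in>Alg. (\<forall>u\<in>F. a u = 0) \<and> a v \<noteq> 0"
  using assms
proof (induction F arbitrary: v rule: finite_induct)
  case empty
  then have "v \<noteq> 0" by simp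
  then obtain a where "a \<in> Alg" "a v = v" using Alg_transitive by blast
  then show ?case using \<open>v \<noteq> 0\<close> by (intro bexI[of _ a]) auto
next
  case (insert u F)
  define J where "J = {a \<in> Alg. \<forall>x\<in>F. a x = 0}"
  have vanish: "a w = 0" if "a \<in> J" "w \<in> span F" for a w
    using lin_eq_span[of a "\<lambda>_. 0" F w] that Alg_lin unfolding J_def by (auto simp: lin_def)
  show ?case
  proof (cases "u \<in> span F")
    case True
    have "v \<notin> span F" using insert.prems span_mono[of F "insert u F"] by blast
    then obtain a where "a \<in> J" "a v \<noteq> 0" using insert.IH unfolding J_def by blast
    then show ?thesis using vanish[OF _ True] unfolding J_def by auto
  next
    case False
    then obtain a0 where a0: "a0 \<in> J" "a0 u \<noteq> 0" using insert.IH unfolding J_def by blast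
    show ?thesis
    proof (rule ccontr)
      assume "\<not> ?thesis"
      then have "a v = 0" if "a \<in> J" "a u = 0" for a using that unfolding J_def by auto
      then obtain c where c: "\<forall>a\<in>J. a v = scale c (a u)"
        using left_ideal_intertwiner[OF _ a0] left_ideal_annihilator unfolding J_def by blast
      have "v - scale c u \<in> span F"
      proof (rule ccontr)
        assume "v - scale c u \<notin> span F"
        then obtain a where "a \<in> J" "a (v - scale c u) \<noteq> 0" using insert.IH unfolding J_def by blast
        then show False using c Alg_lin unfolding J_def by (auto simp: lin_diff lin_scale)
      qed
      then have "v \<in> span (insert u F)" using span_breakdown_eq by blast
      then show False using insert.prems by simp
    qed
  qed
qed

lemma density:
  assumes "finite S" "independent S"
  shows "\<exists>a\<in>Alg. \<forall>s\<in>S. a s = w s"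
proof -
  have "\<forall>s\<in>S. \<exists>a\<in>Alg. (\<forall>x\<in>S-{s}. a x = 0) \<and> a s \<noteq> 0"
  proof
    fix s assume "s \<in> S"
    then have "s \<notin> span (S - {s})" using assms(2) dependent_def by blast
    then show "\<exists>a\<in>Alg. (\<forall>x\<in>S-{s}. a x = 0) \<and> a s \<noteq> 0" using separation assms(1) by blast
  qed
  then obtain A where A: "\<And>s. s \<in> S \<Longrightarrow> A s \<in> Alg \<and> (\<forall>x\<in>S-{s}. A s x = 0) \<and> A s s \<noteq> 0"
    by metis
  have "\<forall>s\<in>S. \<exists>b\<in>Alg. b (A s s) = w s" using A Alg_transitive by blast
  then obtain B where B: "\<And>s. s \<in> S \<Longrightarrow> B s \<in> Alg \<and> B s (A s s) = w s" by metis
  define a where "a v = (\<Sum>s\<in>S. B s (A s v))" for v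
  have "a \<in> Alg" unfolding a_def
    by (rule Alg_sum[OF assms(1)]) (use A B Alg_comp in blast)
  moreover have "a s = w s" if "s \<in> S" for s
  proof -
    have "a s = (\<Sum>t\<in>S. if t = s then w s else 0)" unfolding a_def
      by (rule sum.cong) (use A B that lin_0[OF Alg_lin] in auto)
    then show ?thesis using that assms(1) by simp
  qed
  ultimately show ?thesis by blast
qed

theorem burnside:
  assumes "lin T" shows "\<exists>a\<in>Alg. \<forall>v. a v = T v"
proof -
  obtain B0 where B0: "finite B0" "span B0 = UNIV" using findim by auto
  obtain B where B: "independent B" "UNIV \<subseteq> span B" using basis_exists[of UNIV] by blast
  have "finite B" using independent_span_bound[OF B0(1) B(1)] B0(2) by auto
  obtain a where a: "a \<in> Alg" "\<forall>s\<in>B. a s = T s" using density[OF \<open>finite B\<close> B(1)] by blast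
  have "a v = T v" for v
    using lin_eq_span[OF Alg_lin[OF a(1)] assms, of B v] a B by auto
  then show ?thesis using a by blast
qed

end

lemma geo_sum:
  fixes z :: "'a::field"
  assumes "z ^ M = 1"
  shows "(\<Sum>j<M. z^j) = (if z = 1 then of_nat M else 0)"
  using assms by (simp add: sum_gp_strict)

locale graded_lie = simple_lie scale br for scale :: "'f::field_char_0 \<Rightarrow> 'g::ab_group_add \<Rightarrow> 'g" and br +
  fixes sigma :: "'n::finite \<Rightarrow> 'g \<Rightarrow> 'g" and xi :: "'n \<Rightarrow> 'f" and m :: "'n \<Rightarrow> nat"
  assumes aut: "\<And>i. lie_aut scale br (sigma i)"
    and comm: "\<And>i j. sigma i \<circ> sigma j = sigma j \<circ> sigma i"
    and ord: "\<And>i. has_order (sigma i) (m i)"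
    and prim: "\<And>i. primitive_root (xi i) (m i)"
begin

abbreviation gc where "gc \<delta> \<equiv> gcomp scale sigma xi m \<delta>"

lemma m_pos: "0 < m i" using ord unfolding has_order_def by auto
lemma sig_id: "(sigma i ^^ m i) = id" using ord unfolding has_order_def by auto
lemma xi_m: "xi i ^ m i = 1" using prim unfolding primitive_root_def by auto
lemma xi_prim: "0 < d \<Longrightarrow> d < m i \<Longrightarrow> xi i ^ d \<noteq> 1" using prim unfolding primitive_root_def by auto
lemma xi_ne0: "xi i \<noteq> 0" using xi_m[of i] m_pos[of i] by (metis power_0_left less_not_refl zero_neq_one)

lemma lin_sig: "lin (sigma i)"
  using aut[of i] unfolding lie_aut_def module_hom_iff lin_def by auto
lemma sig_br: "sigma i (br x y) = br (sigma i x) (sigma i y)"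
  using aut[of i] unfolding lie_aut_def by auto

lemma sig_comm': "sigma i' (sigma i w) = sigma i (sigma i' w)"
  using comm[of i' i] by (metis comp_apply)

lemma sig_comm_pow: "sigma i' ((sigma i ^^ j) w) = (sigma i ^^ j) (sigma i' w)"
  by (induction j) (auto simp: sig_comm')

lemma xi_pow_mod: "xi i ^ n = xi i ^ (n mod m i)"
proof -
  have "xi i ^ n = xi i ^ (m i * (n div m i) + n mod m i)" by simp
  also have "\<dots> = (xi i ^ m i) ^ (n div m i) * xi i ^ (n mod m i)" by (simp only: power_add power_mult)
  finally show ?thesis by (simp add: xi_m)
qed

lemma xi_inj: assumes "a < m i" "b < m i" "xi i ^ a = xi i ^ b" shows "a = b"
proof (rule ccontr)
  assume "a \<noteq> b"
  then consider "a < b" | "b < a" by linarith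
  then show False
  proof cases
    case 1
    have "xi i ^ b = xi i ^ a * xi i ^ (b - a)" using 1 by (simp add: power_add[symmetric])
    then have "xi i ^ (b - a) = 1" using assms(3) xi_ne0[of i] by simp
    then show False using xi_prim[of "b - a" i] 1 assms by simp
  next
    case 2
    have "xi i ^ a = xi i ^ b * xi i ^ (a - b)" using 2 by (simp add: power_add[symmetric])
    then have "xi i ^ (a - b) = 1" using assms(3) xi_ne0[of i] by simp
    then show False using xi_prim[of "a - b" i] 2 assms by simp
  qed
qed

text \<open>The averaging operator \<open>m\<^sub>i\<^sup>-\<^sup>1 \<Sum>\<^sub>j \<xi>\<^sub>i\<^sup>-\<^sup>a\<^sup>j \<sigma>\<^sub>i\<^sup>j\<close>, the projection onto the
  \<open>\<xi>\<^sub>i\<^sup>a\<close>-eigenspace of \<open>\<sigma>\<^sub>i\<close> (this needs characteristic zero).\<close>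
definition eig_proj :: "'n \<Rightarrow> nat \<Rightarrow> 'g \<Rightarrow> 'g" where
  "eig_proj i a w = scale (inverse (of_nat (m i))) (\<Sum>j<m i. scale ((inverse (xi i) ^ a) ^ j) ((sigma i ^^ j) w))"

lemma lin_eig_proj: "lin (eig_proj i a)"
proof -
  have "lin (\<lambda>w. \<Sum>j<m i. scale ((inverse (xi i) ^ a) ^ j) ((sigma i ^^ j) w))"
    by (rule lin_sumf) (rule lin_smul[OF lin_funpow[OF lin_sig]])
  then show ?thesis unfolding eig_proj_def[abs_def] by (rule lin_smul)
qed

lemma eig_pow: "sigma i w = scale c w \<Longrightarrow> (sigma i ^^ j) w = scale (c^j) w"
  by (induction j) (auto simp: lin_scale[OF lin_sig] mult.commute)

lemma inv_m2: "inverse (of_nat (m i)) * of_nat (m i) = (1::'f)"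
  using m_pos[of i] by simp

lemma inv_m: "scale (inverse (of_nat (m i))) (scale (of_nat (m i)) w) = w"
  using m_pos[of i] by simp

lemma eig_proj_on_eigvec:
  assumes "e < m i" "a < m i" "sigma i w = scale (xi i ^ e) w"
  shows "eig_proj i a w = (if a = e then w else 0)"
proof -
  define z where "z = inverse (xi i) ^ a * xi i ^ e"
  have "(\<Sum>j<m i. scale ((inverse (xi i) ^ a) ^ j) ((sigma i ^^ j) w))
      = (\<Sum>j<m i. scale (z ^ j) w)"
    by (rule sum.cong) (auto simp: eig_pow[OF assms(3)] z_def power_mult_distrib power_mult[symmetric] mult.commute)
  also have "\<dots> = scale (\<Sum>j<m i. z ^ j) w" by (simp add: scale_sum_left)
  also have "(\<Sum>j<m i. z ^ j) = (if z = 1 then of_nat (m i) else 0)"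
  proof (rule geo_sum)
    have "z ^ m i = (inverse (xi i ^ m i)) ^ a * (xi i ^ m i) ^ e"
      by (simp add: z_def power_mult_distrib power_mult[symmetric] mult.commute power_inverse)
    then show "z ^ m i = 1" by (simp add: xi_m)
  qed
  also have "(z = 1) \<longleftrightarrow> a = e"
  proof
    assume "z = 1"
    then have "xi i ^ e = xi i ^ a" unfolding z_def using xi_ne0[of i]
      by (simp add: power_inverse field_simps)
    then show "a = e" using xi_inj assms by metis
  next
    assume "a = e" then show "z = 1" unfolding z_def using xi_ne0[of i]
      by (simp add: power_inverse)
  qed
  finally show ?thesis unfolding eig_proj_def by (auto simp: inv_m inv_m2)
qed

lemma eig_proj_sum: "(\<Sum>a<m i. eig_proj i a w) = w"
proof -
  have "(\<Sum>a<m i. eig_proj i a w) = scale (inverse (of_nat (m i)))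
      (\<Sum>a<m i. \<Sum>j<m i. scale ((inverse (xi i) ^ j) ^ a) ((sigma i ^^ j) w))"
    unfolding eig_proj_def by (simp add: scale_sum_right power_mult[symmetric] mult.commute)
  also have "(\<Sum>a<m i. \<Sum>j<m i. scale ((inverse (xi i) ^ j) ^ a) ((sigma i ^^ j) w))
      = (\<Sum>j<m i. scale (\<Sum>a<m i. (inverse (xi i) ^ j) ^ a) ((sigma i ^^ j) w))"
    by (subst sum.swap) (simp add: scale_sum_left)
  also have "\<dots> = (\<Sum>j<m i. if j = 0 then scale (of_nat (m i)) w else 0)"
  proof (rule sum.cong)
    fix j assume j: "j \<in> {..<m i}"
    have "(inverse (xi i) ^ j) ^ m i = 1"
      by (simp add: power_mult[symmetric] mult.commute[of j] power_mult power_inverse xi_m)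
    moreover have "(inverse (xi i) ^ j = 1) \<longleftrightarrow> j = 0"
    proof
      assume "inverse (xi i) ^ j = 1"
      then have "xi i ^ j = 1" by (simp add: power_inverse)
      then show "j = 0" using xi_prim[of j i] j by (cases "j = 0") auto
    qed simp
    ultimately show "scale (\<Sum>a<m i. (inverse (xi i) ^ j) ^ a) ((sigma i ^^ j) w)
        = (if j = 0 then scale (of_nat (m i)) w else 0)"
      by (simp add: geo_sum)
  qed simp
  also have "\<dots> = scale (of_nat (m i)) w" using m_pos[of i] by simp
  finally show ?thesis by (simp add: inv_m inv_m2)
qed

lemma eig_proj_commute: "sigma i' (eig_proj i a w) = eig_proj i a (sigma i' w)"
  unfolding eig_proj_def by (simp add: lin_scale[OF lin_sig] lin_sum[OF lin_sig] sig_comm_pow)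

lemma eig_proj_eigvec: "sigma i (eig_proj i a w) = scale (xi i ^ a) (eig_proj i a w)"
proof -
  define q where "q = inverse (xi i) ^ a"
  define F where "F j = scale (q ^ j) ((sigma i ^^ j) w)" for j
  have qx: "xi i ^ a * q = 1" unfolding q_def using xi_ne0[of i] by (simp add: power_inverse)
  have F_m: "F (m i) = F 0" unfolding F_def
    by (simp add: sig_id q_def power_mult[symmetric] mult.commute[of a] power_mult power_inverse xi_m)
  have "sigma i (\<Sum>j<m i. F j) = (\<Sum>j<m i. scale (q ^ j) ((sigma i ^^ Suc j) w))"
    unfolding F_def by (simp add: lin_sum[OF lin_sig] lin_scale[OF lin_sig])
  also have "\<dots> = (\<Sum>j<m i. scale (xi i ^ a) (F (Suc j)))"
    unfolding F_def by (rule sum.cong) (auto simp: mult.assoc[symmetric] qx)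
  also have "\<dots> = scale (xi i ^ a) (\<Sum>j<m i. F (Suc j))" by (simp add: scale_sum_right)
  also have "(\<Sum>j<m i. F (Suc j)) = (\<Sum>j<m i. F j)"
  proof -
    have "(\<Sum>j<Suc (m i). F j) = F 0 + (\<Sum>j<m i. F (Suc j))" by (rule sum.lessThan_Suc_shift)
    moreover have "(\<Sum>j<Suc (m i). F j) = (\<Sum>j<m i. F j) + F (m i)" by simp
    ultimately show ?thesis using F_m by (simp add: add.commute)
  qed
  finally have "sigma i (\<Sum>j<m i. F j) = scale (xi i ^ a) (\<Sum>j<m i. F j)" .
  then show ?thesis unfolding eig_proj_def F_def q_def
    by (simp add: lin_scale[OF lin_sig] scale_left_commute)
qed

lemma gc_iff: "v \<in> gc \<delta> \<longleftrightarrow> (\<forall>i. sigma i v = scale (xi i ^ nat (\<delta> i mod int (m i))) v)"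
  unfolding gcomp_def by simp

lemma gc_0: "0 \<in> gc \<delta>" unfolding gc_iff by (simp add: lin_0[OF lin_sig])
lemma gc_add: "x \<in> gc \<delta> \<Longrightarrow> y \<in> gc \<delta> \<Longrightarrow> x + y \<in> gc \<delta>"
  unfolding gc_iff by (simp add: lin_add[OF lin_sig] scale_right_distrib)
lemma gc_scale: "x \<in> gc \<delta> \<Longrightarrow> scale c x \<in> gc \<delta>"
  unfolding gc_iff by (simp add: lin_scale[OF lin_sig] mult.commute)
lemma gc_cong: "gbar m \<delta> = gbar m \<delta>' \<Longrightarrow> gc \<delta> = gc \<delta>'"
  unfolding gcomp_def gbar_def by (simp add: fun_eq_iff)

lemma gbar_gbar: "gbar m (gbar m k) = gbar m k" unfolding gbar_def by simp
lemma gc_gbar: "gc (gbar m \<delta>) = gc \<delta>" by (rule gc_cong) (simp add: gbar_gbar)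
lemma gbar_in: "gbar m k \<in> Gset m" unfolding gbar_def Gset_def using m_pos by auto
lemma gbar_id: "r \<in> Gset m \<Longrightarrow> gbar m r = r" unfolding gbar_def Gset_def by (auto simp: fun_eq_iff)
lemma gbar_add_left: "gbar m (gbar m x + y) = gbar m (x + y)"
  unfolding gbar_def by (simp add: fun_eq_iff mod_add_left_eq)
lemma gbar_add_right: "gbar m (x + gbar m y) = gbar m (x + y)"
  unfolding gbar_def by (simp add: fun_eq_iff mod_add_right_eq)
lemma gbar_diff_left: "gbar m (gbar m x - y) = gbar m (x - y)"
  unfolding gbar_def by (simp add: fun_eq_iff mod_diff_left_eq)

lemma gbar_cancel:
  assumes "\<delta> \<in> Gset m" "\<delta>' \<in> Gset m" "gbar m (b + \<delta>) = gbar m (b + \<delta>')"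
  shows "\<delta> = \<delta>'"
proof -
  have "gbar m (gbar m (b + \<delta>) - b) = gbar m (gbar m (b + \<delta>') - b)" using assms(3) by simp
  then have "gbar m \<delta> = gbar m \<delta>'" by (simp add: gbar_diff_left)
  then show ?thesis using gbar_id assms(1,2) by metis
qed

lemma finite_Gset: "finite (Gset m)"
proof -
  have "Gset m \<subseteq> PiE UNIV (\<lambda>i. {0..<int (m i)})" unfolding Gset_def PiE_def Pi_def extensional_def
    by auto
  then show ?thesis by (rule finite_subset[OF _ finite_PiE]) auto
qed

definition joint_eig :: "'n set \<Rightarrow> 'g set" where
  "joint_eig S = {w. \<forall>i\<in>S. \<exists>e<m i. sigma i w = scale (xi i ^ e) w}"

lemma joint_eig_step:
  assumes "w \<in> joint_eig S" "a < m i0" shows "eig_proj i0 a w \<in> joint_eig (insert i0 S)"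
  unfolding joint_eig_def
proof (intro CollectI ballI)
  fix i assume "i \<in> insert i0 S"
  then show "\<exists>e<m i. sigma i (eig_proj i0 a w) = scale (xi i ^ e) (eig_proj i0 a w)"
  proof
    assume "i = i0" then show ?thesis using eig_proj_eigvec assms(2) by blast
  next
    assume "i \<in> S"
    then obtain e where e: "e < m i" "sigma i w = scale (xi i ^ e) w" using assms(1) unfolding joint_eig_def by auto
    have "sigma i (eig_proj i0 a w) = scale (xi i ^ e) (eig_proj i0 a w)"
      using eig_proj_commute[of i i0 a w] e(2) lin_scale[OF lin_eig_proj] by simp
    then show ?thesis using e(1) by blast
  qed
qed

text \<open>Splitting by the projections of one more automorphism at a time, joint eigenvectors span \<open>\<gfrak>\<close>.\<close>
lemma span_joint_eig: "finite S \<Longrightarrow> UNIV \<subseteq> span (joint_eig S)"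
proof (induction S rule: finite_induct)
  case empty
  have "joint_eig {} = UNIV" unfolding joint_eig_def by simp
  then show ?case by simp
next
  case (insert i0 S)
  have "joint_eig S \<subseteq> span (joint_eig (insert i0 S))"
  proof
    fix w assume w: "w \<in> joint_eig S"
    have "w = (\<Sum>a<m i0. eig_proj i0 a w)" by (simp add: eig_proj_sum)
    also have "\<dots> \<in> span (joint_eig (insert i0 S))"
      by (rule span_sum) (use joint_eig_step[OF w] in \<open>auto intro: span_base\<close>)
    finally show "w \<in> span (joint_eig (insert i0 S))" .
  qed
  then have "span (joint_eig S) \<subseteq> span (joint_eig (insert i0 S))" by (metis span_mono span_span)
  then show ?case using insert.IH by blast
qed

lemma joint_eig_homogeneous: assumes "w \<in> joint_eig UNIV" shows "\<exists>\<delta>\<in>Gset m. w \<in> gc \<delta>"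
proof -
  have "\<forall>i. \<exists>e. e < m i \<and> sigma i w = scale (xi i ^ e) w" using assms unfolding joint_eig_def by auto
  then obtain e where e: "\<And>i. e i < m i \<and> sigma i w = scale (xi i ^ e i) w" by metis
  define \<delta> where "\<delta> i = int (e i)" for i
  have "\<delta> \<in> Gset m" unfolding Gset_def \<delta>_def using e by auto
  moreover have "w \<in> gc \<delta>" unfolding gc_iff \<delta>_def
  proof
    fix i
    have "int (e i) mod int (m i) = int (e i)" using e[of i] by simp
    then show "sigma i w = scale (xi i ^ nat (int (e i) mod int (m i))) w" using e[of i] by simp
  qed
  ultimately show ?thesis by blast
qed

lemma span_gc: "x \<in> span (\<Union>\<delta>\<in>Gset m. gc \<delta>)"
proof -
  have "joint_eig UNIV \<subseteq> (\<Union>\<delta>\<in>Gset m. gc \<delta>)" using joint_eig_homogeneous by blast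
  then have "span (joint_eig UNIV) \<subseteq> span (\<Union>\<delta>\<in>Gset m. gc \<delta>)" by (rule span_mono)
  then show ?thesis using span_joint_eig[of UNIV] by auto
qed

text \<open>Projecting successively onto the eigenvalues prescribed by \<open>\<beta>\<close> for the automorphisms
  \<open>\<sigma>\<^sub>i\<close>, \<open>i \<in> S\<close>, gives a linear map keeping exactly the homogeneous vectors whose degree
  agrees with \<open>\<beta>\<close> at the coordinates in \<open>S\<close>.\<close>
lemma partial_component_projection:
  assumes "\<beta> \<in> Gset m" "finite S"
  shows "\<exists>Q. lin Q \<and> (\<forall>\<alpha> v. v \<in> gc \<alpha> \<longrightarrow>
      Q v = (if (\<forall>i\<in>S. \<alpha> i mod int (m i) = \<beta> i) then v else 0))"
  using assms(2)
proof (induction S rule: finite_induct)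
  case empty
  show ?case by (rule exI[of _ "\<lambda>v. v"]) (simp add: lin_def)
next
  case (insert i0 S)
  then obtain Q where Q: "lin Q" "\<And>\<alpha> v. v \<in> gc \<alpha> \<Longrightarrow>
    Q v = (if (\<forall>i\<in>S. \<alpha> i mod int (m i) = \<beta> i) then v else 0)" by blast
  define Q' where "Q' v = eig_proj i0 (nat (\<beta> i0)) (Q v)" for v
  have "lin Q'" unfolding Q'_def using lin_comp[OF lin_eig_proj Q(1)] .
  moreover have "Q' v = (if (\<forall>i\<in>insert i0 S. \<alpha> i mod int (m i) = \<beta> i) then v else 0)"
    if v: "v \<in> gc \<alpha>" for \<alpha> v
  proof -
    have b0: "0 \<le> \<beta> i0" "\<beta> i0 < int (m i0)" using assms(1) unfolding Gset_def by auto
    have ev: "sigma i0 v = scale (xi i0 ^ nat (\<alpha> i0 mod int (m i0))) v" using v unfolding gc_iff by auto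
    have e_lt: "nat (\<alpha> i0 mod int (m i0)) < m i0" using m_pos[of i0] by (simp add: nat_less_iff)
    have "eig_proj i0 (nat (\<beta> i0)) v = (if \<alpha> i0 mod int (m i0) = \<beta> i0 then v else 0)"
      using eig_proj_on_eigvec[OF e_lt _ ev, of "nat (\<beta> i0)"] b0 m_pos[of i0]
      by (auto simp: nat_less_iff nat_eq_iff2)
    then show ?thesis unfolding Q'_def using Q(2)[OF v] lin_0[OF lin_eig_proj] by auto
  qed
  ultimately show ?case by blast
qed

lemma component_projection:
  assumes "\<beta> \<in> Gset m"
  shows "\<exists>Q. lin Q \<and> (\<forall>\<alpha> v. v \<in> gc \<alpha> \<longrightarrow> Q v = (if gbar m \<alpha> = \<beta> then v else 0))
           \<and> (\<forall>v. Q v \<in> gc \<beta>)"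
proof -
  have gbar_iff: "(\<forall>i. \<alpha> i mod int (m i) = \<beta> i) \<longleftrightarrow> gbar m \<alpha> = \<beta>" for \<alpha>
    unfolding gbar_def by (auto simp: fun_eq_iff)
  have "\<exists>Q. lin Q \<and> (\<forall>\<alpha> v. v \<in> gc \<alpha> \<longrightarrow> Q v = (if gbar m \<alpha> = \<beta> then v else 0))"
    using partial_component_projection[OF assms finite_UNIV] by (simp add: gbar_iff)
  then obtain Q where Q: "lin Q" "\<And>\<alpha> v. v \<in> gc \<alpha> \<Longrightarrow> Q v = (if gbar m \<alpha> = \<beta> then v else 0)"
    by blast
  have "Q v \<in> gc \<beta>" for v
    using span_gc[of v]
  proof (induction rule: span_induct)
    case base
    show ?case unfolding subspace_def
      by (auto simp: lin_0[OF Q(1)] lin_add[OF Q(1)] lin_scale[OF Q(1)] gc_0 gc_add gc_scale)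
  next
    case (step x)
    then obtain \<alpha> where "x \<in> gc \<alpha>" by blast
    then show ?case using Q(2)[of x \<alpha>] gc_0 gc_gbar[of \<alpha>] by auto
  qed
  then show ?thesis using Q by blast
qed

lemma lin_eq_on_components:
  assumes "lin a" "lin b" "\<And>\<alpha> v. v \<in> gc \<alpha> \<Longrightarrow> a v = b v"
  shows "a v = b v"
  using lin_eq_span[OF assms(1,2) _ span_gc[of v]] assms(3) by blast

inductive Galg :: "('n \<Rightarrow> int) \<Rightarrow> ('g \<Rightarrow> 'g) \<Rightarrow> bool" where
  G_br: "x \<in> gc s \<Longrightarrow> Galg s (br x)"
| G_plus: "Galg s a \<Longrightarrow> Galg s b \<Longrightarrow> Galg s (\<lambda>v. a v + b v)"
| G_smul: "Galg s a \<Longrightarrow> Galg s (\<lambda>v. scale c (a v))"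
| G_comp: "Galg s a \<Longrightarrow> Galg t b \<Longrightarrow> Galg (s + t) (\<lambda>v. a (b v))"

lemma Galg_lin: "Galg s a \<Longrightarrow> lin a"
proof (induction rule: Galg.induct)
  case (G_br x s) show ?case by (rule lin_br)
next
  case (G_plus s a b) then show ?case using lin_plus by blast
next
  case (G_smul s a c) then show ?case using lin_smul by blast
next
  case (G_comp s a t b) then show ?case using lin_comp by blast
qed

lemma Galg_zero: "Galg s (\<lambda>v. 0)"
proof -
  have "br 0 = (\<lambda>v. 0)" by auto
  then show ?thesis using G_br[OF gc_0[of s]] by simp
qed

lemma Galg_sum: "finite S \<Longrightarrow> (\<And>j. j \<in> S \<Longrightarrow> Galg s (F j)) \<Longrightarrow> Galg s (\<lambda>v. \<Sum>j\<in>S. F j v)"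
proof (induction S rule: finite_induct)
  case empty then show ?case using Galg_zero by simp
next
  case (insert x S)
  then have "Galg s (\<lambda>v. F x v + (\<Sum>j\<in>S. F j v))" using G_plus[of s "F x" "\<lambda>v. \<Sum>j\<in>S. F j v"] by simp
  then show ?case using insert.hyps by simp
qed

lemma xi_add: "xi i ^ nat ((x + y) mod int (m i)) = xi i ^ nat (x mod int (m i)) * xi i ^ nat (y mod int (m i))"
proof -
  define p where "p = nat (x mod int (m i))"
  define q where "q = nat (y mod int (m i))"
  have mp: "0 < int (m i)" using m_pos[of i] by simp
  have "int ((p + q) mod m i) = (x + y) mod int (m i)"
    unfolding p_def q_def using mp by (simp add: of_nat_mod mod_add_eq)
  then have "nat ((x + y) mod int (m i)) = (p + q) mod m i" by linarith
  then have "xi i ^ nat ((x + y) mod int (m i)) = xi i ^ (p + q)" using xi_pow_mod[of i "p+q"] by simp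
  then show ?thesis unfolding p_def q_def by (simp add: power_add)
qed

lemma Galg_hom: "Galg s a \<Longrightarrow> v \<in> gc \<alpha> \<Longrightarrow> a v \<in> gc (\<alpha> + s)"
proof (induction arbitrary: \<alpha> v rule: Galg.induct)
  case (G_br x s)
  show ?case unfolding gc_iff
  proof
    fix i
    have "sigma i (br x v) = br (sigma i x) (sigma i v)" by (rule sig_br)
    also have "\<dots> = scale (xi i ^ nat (s i mod int (m i)) * xi i ^ nat (\<alpha> i mod int (m i))) (br x v)"
      using G_br unfolding gc_iff by (simp add: br_scale_l br_scale_r)
    finally show "sigma i (br x v) = scale (xi i ^ nat ((\<alpha> + s) i mod int (m i))) (br x v)"
      by (simp add: xi_add mult.commute)
  qed
next
  case (G_plus s a b) then show ?case by (simp add: gc_add)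
next
  case (G_smul s a c) then show ?case by (simp add: gc_scale)
next
  case (G_comp s a t b)
  have "b v \<in> gc (\<alpha> + t)" by (rule G_comp.IH(2)[OF G_comp.prems])
  then have "a (b v) \<in> gc (\<alpha> + t + s)" by (rule G_comp.IH(1))
  moreover have "\<alpha> + t + s = \<alpha> + (s + t)" by (simp add: add_ac)
  ultimately show ?case by (simp only:)
qed

lemma Galg_degree_mod: "Galg s a \<Longrightarrow> gbar m s = gbar m t \<Longrightarrow> Galg t a"
proof (induction arbitrary: t rule: Galg.induct)
  case (G_br x s)
  then show ?case using gc_cong[of s t] by (simp add: Galg.G_br)
next
  case (G_plus s a b) then show ?case by (simp add: Galg.G_plus)
next
  case (G_smul s a c) then show ?case by (simp add: Galg.G_smul)
next
  case (G_comp s a s' b)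
  have "gbar m s' = gbar m (t - s)" by (metis G_comp.prems gbar_diff_left add_diff_cancel_left')
  then have "Galg (t - s) b" by (rule G_comp.IH(2))
  from Galg.G_comp[OF G_comp.hyps(1) this] show ?case by simp
qed

definition graded :: "('g \<Rightarrow> 'g) \<Rightarrow> bool" where
  "graded a \<longleftrightarrow> (\<exists>h. (\<forall>\<delta>\<in>Gset m. Galg \<delta> (h \<delta>)) \<and> (\<forall>v. a v = (\<Sum>\<delta>\<in>Gset m. h \<delta> v)))"

lemma graded_plus: assumes "graded a" "graded b" shows "graded (\<lambda>v. a v + b v)"
proof -
  obtain h1 where h1: "\<forall>\<delta>\<in>Gset m. Galg \<delta> (h1 \<delta>)" "\<forall>v. a v = (\<Sum>\<delta>\<in>Gset m. h1 \<delta> v)"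
    using assms(1) unfolding graded_def by blast
  obtain h2 where h2: "\<forall>\<delta>\<in>Gset m. Galg \<delta> (h2 \<delta>)" "\<forall>v. b v = (\<Sum>\<delta>\<in>Gset m. h2 \<delta> v)"
    using assms(2) unfolding graded_def by blast
  show ?thesis unfolding graded_def
    by (rule exI[of _ "\<lambda>\<delta> v. h1 \<delta> v + h2 \<delta> v"]) (use h1 h2 in \<open>auto intro: G_plus simp: sum.distrib\<close>)
qed

lemma graded_smul: assumes "graded a" shows "graded (\<lambda>v. scale c (a v))"
proof -
  obtain h where h: "\<forall>\<delta>\<in>Gset m. Galg \<delta> (h \<delta>)" "\<forall>v. a v = (\<Sum>\<delta>\<in>Gset m. h \<delta> v)"
    using assms unfolding graded_def by blast
  show ?thesis unfolding graded_def
    by (rule exI[of _ "\<lambda>\<delta> v. scale c (h \<delta> v)"]) (use h in \<open>auto intro: G_smul simp: scale_sum_right\<close>)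
qed

lemma graded_br_homogeneous:
  assumes "\<delta>0 \<in> Gset m" "x \<in> gc \<delta>0" shows "graded (br x)"
proof -
  define h where "h \<delta> = (\<lambda>v. if \<delta> = \<delta>0 then br x v else 0)" for \<delta>
  have "Galg \<delta> (h \<delta>)" for \<delta>
    using G_br[OF assms(2)] Galg_zero by (cases "\<delta> = \<delta>0") (simp_all add: h_def)
  moreover have "br x v = (\<Sum>\<delta>\<in>Gset m. h \<delta> v)" for v
    unfolding h_def using assms(1) finite_Gset by (simp add: if_distrib cong: if_cong)
  ultimately show ?thesis unfolding graded_def by blast
qed

text \<open>Every \<open>ad x\<close> is graded, since \<open>x\<close> is a sum of homogeneous elements.\<close>
lemma graded_br: "graded (br x)"
  using span_gc[of x]
proof (induction rule: span_induct)
  case base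
  have "br 0 = (\<lambda>v. 0)" "br (x + y) = (\<lambda>v. br x v + br y v)"
    "br (scale c x) = (\<lambda>v. scale c (br x v))" for x y c
    by (simp_all add: br_add_l br_scale_l fun_eq_iff)
  moreover have "graded (\<lambda>v. 0)" unfolding graded_def using Galg_zero by (intro exI[of _ "\<lambda>_ _. 0"]) simp
  ultimately show ?case unfolding subspace_def by (simp add: graded_plus graded_smul)
next
  case (step x)
  then show ?case using graded_br_homogeneous by blast
qed

lemma sum_Gset_translate: "(\<Sum>\<delta>\<in>Gset m. f (gbar m (\<delta> - t))) = (\<Sum>\<delta>\<in>Gset m. f \<delta>)"
proof (rule sum.reindex_bij_witness[where i="\<lambda>\<delta>. gbar m (\<delta> + t)" and j="\<lambda>\<delta>. gbar m (\<delta> - t)"])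
  fix \<delta> assume "\<delta> \<in> Gset m"
  then show "gbar m (gbar m (\<delta> - t) + t) = \<delta>" by (simp add: gbar_add_left gbar_id)
  show "gbar m (\<delta> - t) \<in> Gset m" by (rule gbar_in)
next
  fix \<delta> assume "\<delta> \<in> Gset m"
  then show "gbar m (gbar m (\<delta> + t) - t) = \<delta>" by (simp add: gbar_diff_left gbar_id)
  show "gbar m (\<delta> + t) \<in> Gset m" by (rule gbar_in)
qed simp

text \<open>Composites of graded operators are graded: the piece of degree \<open>\<delta>\<close> of \<open>a \<circ> b\<close> collects the
  products of pieces of degrees \<open>\<delta>\<^sub>1\<close> and \<open>\<delta> - \<delta>\<^sub>1\<close>.\<close>
lemma graded_comp: assumes "graded a" "graded b" shows "graded (\<lambda>v. a (b v))"
proof -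
  obtain h1 where h1: "\<forall>\<delta>\<in>Gset m. Galg \<delta> (h1 \<delta>)" "\<forall>v. a v = (\<Sum>\<delta>\<in>Gset m. h1 \<delta> v)"
    using assms(1) unfolding graded_def by blast
  obtain h2 where h2: "\<forall>\<delta>\<in>Gset m. Galg \<delta> (h2 \<delta>)" "\<forall>v. b v = (\<Sum>\<delta>\<in>Gset m. h2 \<delta> v)"
    using assms(2) unfolding graded_def by blast
  have lin1: "lin (h1 \<delta>)" if "\<delta> \<in> Gset m" for \<delta> using h1(1) that Galg_lin by blast
  define h where "h \<delta> = (\<lambda>v. \<Sum>\<delta>1\<in>Gset m. h1 \<delta>1 (h2 (gbar m (\<delta> - \<delta>1)) v))" for \<delta>
  have "Galg \<delta> (h \<delta>)" if "\<delta> \<in> Gset m" for \<delta> unfolding h_def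
  proof (rule Galg_sum[OF finite_Gset])
    fix \<delta>1 assume "\<delta>1 \<in> Gset m"
    then have "Galg (\<delta>1 + gbar m (\<delta> - \<delta>1)) (\<lambda>v. h1 \<delta>1 (h2 (gbar m (\<delta> - \<delta>1)) v))"
      using G_comp h1(1) h2(1) gbar_in by blast
    moreover have "gbar m (\<delta>1 + gbar m (\<delta> - \<delta>1)) = gbar m \<delta>" by (simp add: gbar_add_right)
    ultimately show "Galg \<delta> (\<lambda>v. h1 \<delta>1 (h2 (gbar m (\<delta> - \<delta>1)) v))" by (rule Galg_degree_mod)
  qed
  moreover have "a (b v) = (\<Sum>\<delta>\<in>Gset m. h \<delta> v)" for v
  proof -
    have "(\<Sum>\<delta>\<in>Gset m. h \<delta> v) = (\<Sum>\<delta>1\<in>Gset m. \<Sum>\<delta>\<in>Gset m. h1 \<delta>1 (h2 (gbar m (\<delta> - \<delta>1)) v))"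
      unfolding h_def by (rule sum.swap)
    also have "\<dots> = (\<Sum>\<delta>1\<in>Gset m. \<Sum>\<delta>2\<in>Gset m. h1 \<delta>1 (h2 \<delta>2 v))"
      by (rule sum.cong[OF refl]) (rule sum_Gset_translate)
    also have "\<dots> = (\<Sum>\<delta>1\<in>Gset m. h1 \<delta>1 (b v))"
      using h2(2) lin1 by (simp add: lin_sum)
    also have "\<dots> = a (b v)" using h1(2) by simp
    finally show ?thesis by simp
  qed
  ultimately show ?thesis unfolding graded_def by blast
qed

lemma graded_Alg: "a \<in> Alg \<Longrightarrow> graded a"
proof (induction rule: Alg.induct)
  case (Alg_br x) show ?case by (rule graded_br)
next
  case (Alg_plus a b) then show ?case using graded_plus by blast
next
  case (Alg_smul a c) then show ?case using graded_smul by blast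
next
  case (Alg_comp a b) then show ?case using graded_comp by blast
qed

text \<open>By
  Burnside's theorem it lies in \<open>Alg\<close>, hence is graded, and comparing degrees on each \<open>\<gfrak>\<^sub>b\<close>
  shows that it coincides with its piece of degree \<open>s\<close>.\<close>
lemma homogeneous_map_in_Galg:
  assumes T: "lin T" and hom: "\<And>\<alpha> v. v \<in> gc \<alpha> \<Longrightarrow> T v \<in> gc (\<alpha> + s)"
  shows "Galg s T"
proof -
  obtain a where a: "a \<in> Alg" "\<And>v. a v = T v" using burnside[OF T] by blast
  obtain h where h: "\<forall>\<delta>\<in>Gset m. Galg \<delta> (h \<delta>)" "\<forall>v. T v = (\<Sum>\<delta>\<in>Gset m. h \<delta> v)"
    using graded_Alg[OF a(1)] a(2) unfolding graded_def by auto
  define \<delta>0 where "\<delta>0 = gbar m s"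
  have \<delta>0: "\<delta>0 \<in> Gset m" unfolding \<delta>0_def by (rule gbar_in)
  have "h \<delta>0 v = T v" if v: "v \<in> gc b" for b v
  proof -
    define \<gamma> where "\<gamma> = gbar m (b + s)"
    obtain Q where Q: "lin Q" "\<And>\<alpha> v. v \<in> gc \<alpha> \<Longrightarrow> Q v = (if gbar m \<alpha> = \<gamma> then v else 0)"
      using component_projection[OF gbar_in[of "b + s"]] unfolding \<gamma>_def by blast
    have select: "Q (h \<delta> v) = (if \<delta> = \<delta>0 then h \<delta> v else 0)" if "\<delta> \<in> Gset m" for \<delta>
    proof -
      have "h \<delta> v \<in> gc (b + \<delta>)" using Galg_hom h(1) that v by blast
      moreover have "gbar m (b + \<delta>) = \<gamma> \<longleftrightarrow> \<delta> = \<delta>0"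
        using gbar_cancel[OF that \<delta>0] by (auto simp: \<gamma>_def \<delta>0_def gbar_add_right)
      ultimately show ?thesis using Q(2) by auto
    qed
    have "T v = Q (T v)" using Q(2)[OF hom[OF v]] by (simp add: \<gamma>_def)
    also have "\<dots> = (\<Sum>\<delta>\<in>Gset m. Q (h \<delta> v))" using h(2) by (simp add: lin_sum[OF Q(1)])
    also have "\<dots> = (\<Sum>\<delta>\<in>Gset m. if \<delta> = \<delta>0 then h \<delta> v else 0)" by (rule sum.cong) (simp_all add: select)
    also have "\<dots> = h \<delta>0 v" using \<delta>0 finite_Gset by simp
    finally show ?thesis by simp
  qed
  then have "h \<delta>0 = T"
    using lin_eq_on_components[OF Galg_lin T] h(1) \<delta>0 by (intro ext) blast
  moreover have "Galg s (h \<delta>0)"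
    using Galg_degree_mod[of \<delta>0 "h \<delta>0" s] h(1) \<delta>0 by (simp add: \<delta>0_def gbar_gbar)
  ultimately show ?thesis by simp
qed

end

text \<open>Applying a linear map
  \<open>\<phi>\<close> coefficientwise and shifting the exponents by \<open>s\<close> gives \<open>x \<otimes> t\<^sup>k \<mapsto> \<phi> x \<otimes> t\<^bsup>k+s\<^esup>\<close>.\<close>
definition shiftop :: "('g::ab_group_add \<Rightarrow> 'g) \<Rightarrow> ('n \<Rightarrow> int) \<Rightarrow> (('n \<Rightarrow> int) \<Rightarrow>\<^sub>0 'g) \<Rightarrow> ('n \<Rightarrow> int) \<Rightarrow>\<^sub>0 'g" where
  "shiftop \<phi> s Y = Abs_poly_mapping (\<lambda>k. \<phi> (Poly_Mapping.lookup Y (k - s)))"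

lemma lookup_shiftop:
  assumes "\<phi> 0 = 0"
  shows "Poly_Mapping.lookup (shiftop \<phi> s Y) k = \<phi> (Poly_Mapping.lookup Y (k - s))"
proof -
  have "{k. \<phi> (Poly_Mapping.lookup Y (k - s)) \<noteq> 0} \<subseteq> (\<lambda>b. b + s) ` Poly_Mapping.keys Y"
  proof
    fix k assume "k \<in> {k. \<phi> (Poly_Mapping.lookup Y (k - s)) \<noteq> 0}"
    then have "Poly_Mapping.lookup Y (k - s) \<noteq> 0" using assms by auto
    then have "k - s \<in> Poly_Mapping.keys Y" by (simp add: in_keys_iff)
    moreover have "k = (k - s) + s" by simp
    ultimately show "k \<in> (\<lambda>b. b + s) ` Poly_Mapping.keys Y" by blast
  qed
  then have "finite {k. \<phi> (Poly_Mapping.lookup Y (k - s)) \<noteq> 0}" by (rule finite_subset) simp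
  then show ?thesis unfolding shiftop_def by simp
qed

lemma lookup_tpow_mult:
  fixes P :: "('n \<Rightarrow> int) \<Rightarrow>\<^sub>0 'f::field"
  shows "Poly_Mapping.lookup (tpow a * P) c = Poly_Mapping.lookup P (c - a)"
proof -
  have "Poly_Mapping.lookup (tpow a * P) c = (\<Sum>l. (1 when a = l) * (\<Sum>q. Poly_Mapping.lookup P q when c = l + q))"
    unfolding tpow_def lookup_mult lookup_single ..
  also have "\<dots> = (\<Sum>l. if a = l then (\<Sum>q. Poly_Mapping.lookup P q when c = l + q) else 0)"
    by (rule Sum_any.cong) (simp add: when_def)
  also have "\<dots> = (\<Sum>q. Poly_Mapping.lookup P q when c = a + q)" by simp
  also have "\<dots> = (\<Sum>q. if c - a = q then Poly_Mapping.lookup P q else 0)"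
    by (rule Sum_any.cong) (auto simp: when_def)
  also have "\<dots> = Poly_Mapping.lookup P (c - a)" by simp
  finally show ?thesis .
qed

lemma (in vector_space) lookup_tens_tpow:
  "Poly_Mapping.lookup (tens scale x (tpow s * f)) c = scale (Poly_Mapping.lookup f (c - s)) x"
  unfolding tens_def by (simp add: map.rep_eq when_def lookup_tpow_mult)

context graded_lie
begin

lemma coefficient_map:
  assumes r: "gbar m l = r" and B: "independent B" "span B = gc r" and x: "x \<in> gc k"
  shows "\<exists>T. lin T \<and> (\<forall>\<alpha> v. v \<in> gc \<alpha> \<longrightarrow> T v \<in> gc (\<alpha> + (k - l)))
     \<and> (\<forall>\<alpha> v. v \<in> gc \<alpha> \<longrightarrow> T v = (if gbar m \<alpha> = r then scale (representation B v b) x else 0))"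
proof -
  obtain Q where Q: "lin Q" "\<And>\<alpha> v. v \<in> gc \<alpha> \<Longrightarrow> Q v = (if gbar m \<alpha> = r then v else 0)"
    "\<And>v. Q v \<in> span B"
    using component_projection[of r] r gbar_in B(2) by blast
  define T where "T v = scale (representation B (Q v) b) x" for v
  have "lin T" unfolding lin_def T_def
    using representation_add[OF B(1) Q(3) Q(3)] representation_scale[OF B(1) Q(3)]
    by (simp add: lin_add[OF Q(1)] lin_scale[OF Q(1)] scale_left_distrib)
  moreover have formula: "T v = (if gbar m \<alpha> = r then scale (representation B v b) x else 0)"
    if "v \<in> gc \<alpha>" for \<alpha> v
    unfolding T_def using Q(2)[OF that] by (simp add: representation_zero)
  moreover have "T v \<in> gc (\<alpha> + (k - l))" if "v \<in> gc \<alpha>" for \<alpha> v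
  proof (cases "gbar m \<alpha> = r")
    case True
    then have "gbar m (\<alpha> + (k - l)) = gbar m k"
      using r by (metis gbar_add_left add_diff_cancel_left' add_diff_eq)
    then show ?thesis using formula[OF that] True x gc_scale gc_cong by metis
  next
    case False
    then show ?thesis using formula[OF that] gc_0 by simp
  qed
  ultimately show ?thesis by blast
qed

lemma tens_proj_eq_shift:
  assumes Y: "Y \<in> multiloop scale sigma xi m"
    and T: "\<And>\<alpha> v. v \<in> gc \<alpha> \<Longrightarrow>
      T v = (if gbar m \<alpha> = r then scale (representation (xb r ` {..<d r}) v (xb r j)) x else 0)"
  shows "tens scale x (tpow s * proj scale m xb d r j Y) = shiftop T s Y"
proof (rule poly_mapping_eqI)
  fix c
  have T0: "T 0 = 0" using T[OF gc_0[of 0]] by (simp add: representation_zero)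
  have Yc: "Poly_Mapping.lookup Y (c - s) \<in> gc (c - s)" using Y unfolding multiloop_def by blast
  have "Poly_Mapping.lookup (proj scale m xb d r j Y) (c - s)
      = (if gbar m (c - s) = r
         then representation (xb r ` {..<d r}) (Poly_Mapping.lookup Y (c - s)) (xb r j) else 0)"
    unfolding proj_def lookup_mapp by (auto simp: when_def in_keys_iff representation_zero)
  then show "Poly_Mapping.lookup (tens scale x (tpow s * proj scale m xb d r j Y)) c
      = Poly_Mapping.lookup (shiftop T s Y) c"
    using T[OF Yc] by (simp add: lookup_tens_tpow lookup_shiftop[where \<phi>=T, OF T0])
qed

end

locale multiloop_ideal = graded_lie scale br sigma xi m
  for scale :: "'f::field_char_0 \<Rightarrow> 'g::ab_group_add \<Rightarrow> 'g"
  and br and sigma :: "'n::finite \<Rightarrow> 'g \<Rightarrow> 'g" and xi m +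
  fixes I :: "(('n \<Rightarrow> int) \<Rightarrow>\<^sub>0 'g) set"
  assumes I: "loop_ideal scale br sigma xi m I"
begin

lemma I_L: "I \<subseteq> multiloop scale sigma xi m" using I unfolding loop_ideal_def by auto
lemma I_add: "X \<in> I \<Longrightarrow> Y \<in> I \<Longrightarrow> X + Y \<in> I" using I unfolding loop_ideal_def by auto
lemma I_smul: "X \<in> I \<Longrightarrow> lsmul scale c X \<in> I" using I unfolding loop_ideal_def by auto
lemma I_br: "X \<in> multiloop scale sigma xi m \<Longrightarrow> Y \<in> I \<Longrightarrow> lbr br X Y \<in> I"
  using I unfolding loop_ideal_def by auto

lemma single_L: "x \<in> gc s \<Longrightarrow> Poly_Mapping.single s x \<in> multiloop scale sigma xi m"
  unfolding multiloop_def by (auto simp: lookup_single when_def gc_0)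

lemma lbr_single: "lbr br (Poly_Mapping.single s x) Y = shiftop (br x) s Y"
proof (cases "x = 0")
  case True
  have "br 0 = (\<lambda>v. 0)" by auto
  then show ?thesis using True
    by (intro poly_mapping_eqI) (simp add: lbr_def lookup_shiftop)
next
  case False
  show ?thesis
  proof (rule poly_mapping_eqI)
    fix k
    have "Poly_Mapping.lookup (lbr br (Poly_Mapping.single s x) Y) k
        = (\<Sum>b\<in>Poly_Mapping.keys Y. if s + b = k then br x (Poly_Mapping.lookup Y b) else 0)"
      using False unfolding lbr_def
      by (auto simp: lookup_sum lookup_single when_def intro!: sum.cong)
    also have "\<dots> = (\<Sum>b\<in>Poly_Mapping.keys Y. if b = k - s then br x (Poly_Mapping.lookup Y b) else 0)"
      by (rule sum.cong) (auto simp: algebra_simps)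
    also have "\<dots> = br x (Poly_Mapping.lookup Y (k - s))"
      by (auto simp: in_keys_iff)
    finally show "Poly_Mapping.lookup (lbr br (Poly_Mapping.single s x) Y) k = Poly_Mapping.lookup (shiftop (br x) s Y) k"
      by (simp add: lookup_shiftop)
  qed
qed

text \<open>Shifting by a homogeneous operator of degree \<open>s\<close> preserves \<open>I\<close>: each generating step is a
  bracket with an element of \<open>\<L>\<close>, a sum, a scalar multiple, or a composite of two shifts.\<close>
lemma Galg_ideal: "Galg s \<phi> \<Longrightarrow> Y \<in> I \<Longrightarrow> shiftop \<phi> s Y \<in> I"
proof (induction arbitrary: Y rule: Galg.induct)
  case (G_br x s)
  then show ?case using I_br[OF single_L[OF G_br(1)]] lbr_single by metis
next
  case (G_plus s a b)
  have a0: "a 0 = 0" using lin_0[OF Galg_lin[OF G_plus.hyps(1)]] .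
  have b0: "b 0 = 0" using lin_0[OF Galg_lin[OF G_plus.hyps(2)]] .
  have "shiftop (\<lambda>v. a v + b v) s Y = shiftop a s Y + shiftop b s Y"
    by (rule poly_mapping_eqI) (simp add: lookup_shiftop a0 b0 lookup_add)
  then show ?case using I_add G_plus.IH G_plus.prems by simp
next
  case (G_smul s a c)
  have a0: "a 0 = 0" using lin_0[OF Galg_lin[OF G_smul.hyps(1)]] .
  have "shiftop (\<lambda>v. scale c (a v)) s Y = lsmul scale c (shiftop a s Y)"
    by (rule poly_mapping_eqI) (simp add: lookup_shiftop a0 lsmul_def map.rep_eq when_def)
  then show ?case using I_smul G_smul.IH G_smul.prems by simp
next
  case (G_comp s a t b)
  have a0: "a 0 = 0" using lin_0[OF Galg_lin[OF G_comp.hyps(1)]] .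
  have b0: "b 0 = 0" using lin_0[OF Galg_lin[OF G_comp.hyps(2)]] .
  have "shiftop (\<lambda>v. a (b v)) (s + t) Y = shiftop a s (shiftop b t Y)"
    by (rule poly_mapping_eqI) (simp add: lookup_shiftop a0 b0 diff_diff_eq add.commute)
  moreover have "shiftop a s (shiftop b t Y) \<in> I" using G_comp.IH G_comp.prems by blast
  ultimately show ?case by metis
qed

lemma homogeneous_shift_in_ideal:
  assumes "lin T" "\<And>\<alpha> v. v \<in> gc \<alpha> \<Longrightarrow> T v \<in> gc (\<alpha> + s)" "Y \<in> I"
  shows "shiftop T s Y \<in> I"
  using Galg_ideal[OF homogeneous_map_in_Galg[OF assms(1,2)] assms(3)] .

end

text \<open>The theorem: \<open>x\<^sub>k\<^sub>i \<otimes> t\<^bsup>k-l\<^esup> \<pi>\<^sub>l\<^sub>j(Y)\<close> is the shift of \<open>Y\<close> under the coefficient map,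
  a linear map homogeneous of degree \<open>k - l\<close>.\<close>
theorem lemma2p2:
  fixes scale :: "'f::field_char_0 \<Rightarrow> 'g::ab_group_add \<Rightarrow> 'g"
    and br :: "'g \<Rightarrow> 'g \<Rightarrow> 'g"
    and sigma :: "'n::finite \<Rightarrow> 'g \<Rightarrow> 'g"
    and m :: "'n \<Rightarrow> nat"
    and xi :: "'n \<Rightarrow> 'f"
    and xb :: "('n \<Rightarrow> int) \<Rightarrow> nat \<Rightarrow> 'g"
    and d :: "('n \<Rightarrow> int) \<Rightarrow> nat"
    and I :: "(('n \<Rightarrow> int) \<Rightarrow>\<^sub>0 'g) set"
    and Y :: "('n \<Rightarrow> int) \<Rightarrow>\<^sub>0 'g"
  assumes F: "alg_closed TYPE('f)"
    and g: "simple_lie_algebra scale br"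
    and aut: "\<And>i. lie_aut scale br (sigma i)"
    and comm: "\<And>i j. sigma i \<circ> sigma j = sigma j \<circ> sigma i"
    and ord: "\<And>i. has_order (sigma i) (m i)"
    and prim: "\<And>i. primitive_root (xi i) (m i)"
    and basis: "\<And>r. r \<in> Gset m \<Longrightarrow>
        inj_on (xb r) {..<d r}
        \<and> \<not> module.dependent scale (xb r ` {..<d r})
        \<and> module.span scale (xb r ` {..<d r}) = gcomp scale sigma xi m r"
    and I: "loop_ideal scale br sigma xi m I"
    and Y: "Y \<in> I"
  shows "\<forall>k l i j. i < d (gbar m k) \<longrightarrow> j < d (gbar m l) \<longrightarrow>
     tens scale (xb (gbar m k) i) (tpow (k - l) * proj scale m xb d (gbar m l) j Y) \<in> I"
proof (intro allI impI)
  fix k l i j assume i: "i < d (gbar m k)" and "j < d (gbar m l)"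
  have "vector_space scale" using g unfolding simple_lie_algebra_def lie_algebra_def by auto
  then interpret multiloop_ideal scale br sigma xi m I
    unfolding multiloop_ideal_def graded_lie_def simple_lie_def
      multiloop_ideal_axioms_def graded_lie_axioms_def simple_lie_axioms_def
    using F g aut comm ord prim I by blast
  define r where "r = gbar m l"
  define x where "x = xb (gbar m k) i"
  have B: "independent (xb r ` {..<d r})" "span (xb r ` {..<d r}) = gc r"
    using basis[OF gbar_in] unfolding r_def by auto
  have "x \<in> span (xb (gbar m k) ` {..<d (gbar m k)})" unfolding x_def using i by (auto intro: span_base)
  then have x: "x \<in> gc k" using basis[OF gbar_in[of k]] gc_gbar by auto
  obtain T where T: "lin T" "\<And>\<alpha> v. v \<in> gc \<alpha> \<Longrightarrow> T v \<in> gc (\<alpha> + (k - l))"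
    "\<And>\<alpha> v. v \<in> gc \<alpha> \<Longrightarrow>
      T v = (if gbar m \<alpha> = r then scale (representation (xb r ` {..<d r}) v (xb r j)) x else 0)"
    using coefficient_map[OF r_def[symmetric] B x] by blast
  have "tens scale x (tpow (k - l) * proj scale m xb d r j Y) = shiftop T (k - l) Y"
    using tens_proj_eq_shift[where T=T and r=r and xb=xb and d=d and j=j and x=x, OF _ T(3)] Y I_L
    by blast
  moreover have "shiftop T (k - l) Y \<in> I" using homogeneous_shift_in_ideal[OF T(1,2) Y] .
  ultimately show "tens scale (xb (gbar m k) i) (tpow (k - l) * proj scale m xb d (gbar m l) j Y) \<in> I"
    unfolding x_def r_def by simp
qed

end
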